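(* Let $P_n$ be a labeled path whose ribbon diagram $RT(P_n)$ has composition $\alpha=(\alpha_1,\dots,\alpha_k)$ with $k\ge 2$ and $\alpha_i\ge 2$ for every $i$. Then $X(P_n;\mathbf{x},q)$ is not symmetric.
   Context: A labeled path $P_n$ is the path graph with vertices $v_1,\dots,v_n$ (edges $v_iv_{i+1}$) where $v_i$ carries label $\sigma_i$ for a permutation $\sigma$ of $[n]$; vertices are identified with labels. A proper coloring is $c\colon[n]\to\{1,2,\dots\}$ with adjacent vertices colored differently; $\operatorname{asc}(c)=\#\{ij\in E: i<j,\ c(i)<c(j)\}$. The CQF is $X(P_n;\mathbf{x},q)=\sum_{c \text{ proper}} x_{c(1)}\cdots x_{c(n)}q^{\operatorname{asc}(c)}$; it is symmetric if each coefficient of $q^k$ is a symmetric function. The ad-pattern of $P_n$ is $w_1\cdots w_{n-1}$ with $w_i=a$ if $\sigma_i<\sigma_{i+1}$ and $w_i=d$ otherwise. The ribbon diagram $RT(P_n)$: start with box $1$, and for $i=1,\dots,n-1$ place box $i+1$ immediately right of box $i$ if $w_i=a$ and immediately above box $i$ if $w_i=d$. Its composition is $(\alpha_1,\dots,\alpha_\ell)$, where $\alpha_j$ is the number of boxes in the $j$-th row counted from the bottom (equivalently, the lengths of the maximal runs of consecutive boxes joined by $a$-steps, in order). *)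

theory Defs
  imports Main "HOL-Library.FuncSet"
begin

text \<open>A labeled path P_n is given by a permutation sigma of {1..n}: vertex v_i carries
label sigma i, and the edges are {sigma i, sigma (i+1)} for 1 <= i < n.
Vertices are identified with their labels, so colorings are functions on {1..n}.\<close>

definition is_labeled_path :: "nat \<Rightarrow> (nat \<Rightarrow> nat) \<Rightarrow> bool" where
  "is_labeled_path n \<sigma> \<longleftrightarrow> bij_betw \<sigma> {1..n} {1..n}"

definition proper_coloring :: "nat \<Rightarrow> (nat \<Rightarrow> nat) \<Rightarrow> (nat \<Rightarrow> nat) \<Rightarrow> bool" where
  "proper_coloring n \<sigma> c \<longleftrightarrow> c \<in> {1..n} \<rightarrow>\<^sub>E {1..} \<and>
     (\<forall>i\<in>{1..<n}. c (\<sigma> i) \<noteq> c (\<sigma> (Suc i)))"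

definition asc :: "nat \<Rightarrow> (nat \<Rightarrow> nat) \<Rightarrow> (nat \<Rightarrow> nat) \<Rightarrow> nat" where
  "asc n \<sigma> c = card {i\<in>{1..<n}.
      (\<sigma> i < \<sigma> (Suc i) \<and> c (\<sigma> i) < c (\<sigma> (Suc i))) \<or>
      (\<sigma> (Suc i) < \<sigma> i \<and> c (\<sigma> (Suc i)) < c (\<sigma> i))}"

text \<open>Coefficient of x^mu q^k in the chromatic quasisymmetric function X(P_n; x, q):
the number of proper colorings c with asc c = k such that color i is used exactly
mu i times for every i >= 1 (mu 0 is irrelevant, since colors are positive).\<close>
definition cqf_coeff :: "nat \<Rightarrow> (nat \<Rightarrow> nat) \<Rightarrow> (nat \<Rightarrow> nat) \<Rightarrow> nat \<Rightarrow> nat" where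
  "cqf_coeff n \<sigma> \<mu> k = card {c. proper_coloring n \<sigma> c \<and> asc n \<sigma> c = k \<and>
      (\<forall>i\<ge>1. card {v\<in>{1..n}. c v = i} = \<mu> i)}"

text \<open>X is symmetric iff each q^k coefficient is a symmetric function, i.e. its
coefficients are invariant under every permutation of the variables x_1, x_2, ...\<close>
definition cqf_symmetric :: "nat \<Rightarrow> (nat \<Rightarrow> nat) \<Rightarrow> bool" where
  "cqf_symmetric n \<sigma> \<longleftrightarrow>
     (\<forall>k \<mu> \<pi>. bij_betw \<pi> {1..} {1..} \<longrightarrow> cqf_coeff n \<sigma> (\<mu> \<circ> \<pi>) k = cqf_coeff n \<sigma> \<mu> k)"

text \<open>ad-pattern: True = a (ascent sigma i < sigma (i+1)), False = d.\<close>
definition ad_pattern :: "nat \<Rightarrow> (nat \<Rightarrow> nat) \<Rightarrow> bool list" where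
  "ad_pattern n \<sigma> = map (\<lambda>i. \<sigma> i < \<sigma> (Suc i)) [1..<n]"

text \<open>Composition of the ribbon diagram: start with one row containing box 1; an a-step
adds a box to the current row, a d-step starts a new row above.\<close>
definition ribbon_composition :: "nat \<Rightarrow> (nat \<Rightarrow> nat) \<Rightarrow> nat list" where
  "ribbon_composition n \<sigma> =
     foldl (\<lambda>\<alpha> b. if b then butlast \<alpha> @ [last \<alpha> + 1] else \<alpha> @ [1]) [1] (ad_pattern n \<sigma>)"

end

theory Submission
  imports Defs
begin

text \<open>Since the ribbon has at least two rows and none of length one, the path has a peak p,
  i.e. \<open>\<sigma> (p - 1) < \<sigma> p > \<sigma> (p + 1)\<close>. Let b color p with 2 and the other vertices alternately
  with 1 and 3, let \<mu> be its content, and compare the coefficient of \<open>x\<^sup>\<mu> q\<^bsup>asc b\<^esup>\<close> with the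
  one where the exponents of \<open>x\<^sub>1\<close> and \<open>x\<^sub>2\<close> are exchanged. Exchanging the colors 1 and 2 in
  a proper coloring -- everywhere if three consecutive vertices use only these colors,
  otherwise only at vertices without a neighbor colored 1 or 2 -- is an involution that maps
  the colorings counted by the second coefficient injectively into those counted by the
  first, and b is not in the image. The only delicate case,
  a run 2, 1, 2 centered at a peak or valley, is ruled out by a parity argument.\<close>

definition swap12 :: "nat \<Rightarrow> nat" where
  "swap12 x = (if x = 1 then 2 else if x = 2 then 1 else x)"

lemma swap12_swap12 [simp]: "swap12 (swap12 x) = x"
  by (simp add: swap12_def)

lemma swap12_eq_iff: "swap12 x = swap12 y \<longleftrightarrow> x = y"
  by (metis swap12_swap12)

lemma swap12_fixed: "x \<notin> {1, 2} \<Longrightarrow> swap12 x = x"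
  by (auto simp: swap12_def)

lemma bij_betw_swap12: "bij_betw swap12 {1..} {1..}"
  by (rule bij_betwI[where g = swap12]) (auto simp: swap12_def)

lemma swap12_choice_preserves_order:
  fixes x y :: nat
  assumes "1 \<le> x" "1 \<le> y" "x \<noteq> y" "\<not> (x \<in> {1, 2} \<and> y \<in> {1, 2})"
    and "x' \<in> {x, swap12 x}" "y' \<in> {y, swap12 y}"
  shows "x' \<noteq> y' \<and> (x' < y' \<longleftrightarrow> x < y)"
  using assms unfolding swap12_def by (auto split: if_splits)

lemma swap12_less_swap12_iff:
  "x \<in> {1, 2} \<Longrightarrow> y \<in> {1, 2} \<Longrightarrow> x \<noteq> y \<Longrightarrow> swap12 x < swap12 y \<longleftrightarrow> \<not> x < y"
  by (auto simp: swap12_def)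

definition alternating_coloring :: "nat \<Rightarrow> nat \<Rightarrow> nat" where
  "alternating_coloring p i = (if i = p then 2 else if odd (i + p) then 1 else 3)"

lemma alternating_coloring_less_Suc_iff:
  "alternating_coloring p i < alternating_coloring p (Suc i) \<longleftrightarrow> odd (i + p)"
  by (auto simp: alternating_coloring_def)

subsection \<open>Peaks of the labeled path\<close>

definition ribbon_step :: "nat list \<Rightarrow> bool \<Rightarrow> nat list" where
  "ribbon_step \<alpha> b = (if b then butlast \<alpha> @ [last \<alpha> + 1] else \<alpha> @ [1])"

lemma ribbon_composition_foldl:
  "ribbon_composition n \<sigma> = foldl ribbon_step [1] (ad_pattern n \<sigma>)"
  unfolding ribbon_composition_def ribbon_step_def ..

lemma foldl_ribbon_step_ascents:
  "\<forall>b\<in>set bs. b \<Longrightarrow> foldl ribbon_step [x] bs = [x + length bs]"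
  by (induction bs arbitrary: x) (auto simp: ribbon_step_def)

lemma foldl_ribbon_step_hd:
  "2 \<le> length \<alpha> \<Longrightarrow> hd (foldl ribbon_step \<alpha> bs) = hd \<alpha> \<and> 2 \<le> length (foldl ribbon_step \<alpha> bs)"
proof (induction bs arbitrary: \<alpha>)
  case (Cons b bs)
  then have "hd (ribbon_step \<alpha> b) = hd \<alpha>" "2 \<le> length (ribbon_step \<alpha> b)"
    by (cases \<alpha>; auto simp: ribbon_step_def)+
  with Cons.IH show ?case by simp
qed simp

lemma ribbon_composition_peak:
  assumes inj: "inj_on \<sigma> {1..n}"
    and rows: "2 \<le> length (ribbon_composition n \<sigma>)"
    and long_rows: "\<forall>a\<in>set (ribbon_composition n \<sigma>). 2 \<le> a"
  shows "\<exists>p. 2 \<le> p \<and> p + 1 \<le> n \<and> \<sigma> (p - 1) < \<sigma> p \<and> \<sigma> (p + 1) < \<sigma> p"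
proof -
  define descent where "descent i \<longleftrightarrow> 1 \<le> i \<and> i < n \<and> \<not> \<sigma> i < \<sigma> (Suc i)" for i
  have "\<exists>i. descent i"
  proof (rule ccontr)
    assume "\<nexists>i. descent i"
    then have "\<forall>b\<in>set (ad_pattern n \<sigma>). b"
      by (auto simp: ad_pattern_def descent_def)
    then show False
      using rows by (simp add: ribbon_composition_foldl foldl_ribbon_step_ascents)
  qed
  then obtain i where i: "descent i" and least: "\<And>k. k < i \<Longrightarrow> \<not> descent k"
    using exists_least_iff[of descent] by blast
  have first_ascent: "\<sigma> 1 < \<sigma> 2"
  proof (rule ccontr)
    assume first_descent: "\<not> \<sigma> 1 < \<sigma> 2"
    have "[1..<n] = 1 # [2..<n]"
      using i by (auto simp: descent_def upt_conv_Cons numeral_2_eq_2)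
    then have "ribbon_composition n \<sigma> = foldl ribbon_step [1, 1] (map (\<lambda>i. \<sigma> i < \<sigma> (Suc i)) [2..<n])"
      using first_descent
      by (simp add: ribbon_composition_foldl ad_pattern_def ribbon_step_def numeral_2_eq_2)
    then have "hd (ribbon_composition n \<sigma>) = 1" "ribbon_composition n \<sigma> \<noteq> []"
      using foldl_ribbon_step_hd[of "[1, 1]" "map (\<lambda>i. \<sigma> i < \<sigma> (Suc i)) [2..<n]"] by auto
    then show False
      using long_rows hd_in_set by fastforce
  qed
  have "2 \<le> i"
    using i first_ascent by (cases "i = 1") (auto simp: descent_def numeral_2_eq_2)
  moreover have "\<sigma> (i - 1) < \<sigma> i"
    using least[of "i - 1"] i \<open>2 \<le> i\<close> by (auto simp: descent_def)
  moreover have "\<sigma> (i + 1) \<noteq> \<sigma> i"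
    using inj i by (auto simp: descent_def dest: inj_onD)
  then have "\<sigma> (i + 1) < \<sigma> i"
    using i by (simp add: descent_def)
  moreover have "i + 1 \<le> n"
    using i by (simp add: descent_def)
  ultimately show ?thesis
    by blast
qed

lemma card_sym_diff_pair_disjoint:
  assumes "finite A" "a \<notin> A" "b \<notin> A" "a \<noteq> b"
  shows "card (sym_diff A {a, b}) = card A + 2"
proof -
  have "sym_diff A {a, b} = insert a (insert b A)"
    using assms by blast
  then show ?thesis
    using assms by simp
qed

lemma card_sym_diff_pair_subset:
  assumes "finite A" "a \<in> A" "b \<in> A" "a \<noteq> b"
  shows "card (sym_diff A {a, b}) + 2 = card A"
proof -
  have "sym_diff A {a, b} = A - {a, b}" "{a, b} \<subseteq> A" "card {a, b} = 2"
    using assms by auto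
  then show ?thesis
    using assms(1) card_mono[of A "{a, b}"] card_Diff_subset[of "{a, b}" A] by simp
qed

lemma card_sym_diff_pair_one:
  assumes "finite A" "(a \<in> A) \<noteq> (b \<in> A)" "a \<noteq> b"
  shows "card (sym_diff A {a, b}) = card A"
proof (cases "a \<in> A")
  case True
  then have "sym_diff A {a, b} = insert b (A - {a})" "b \<notin> A"
    using assms by auto
  then show ?thesis
    using assms(1) True card.remove[of A a] by simp
next
  case False
  then have "sym_diff A {a, b} = insert a (A - {b})" "b \<in> A"
    using assms by auto
  then show ?thesis
    using assms(1) False card.remove[of A b] by simp
qed

lemma card_odd_sum_complement:
  assumes "odd (j + p)"
  shows "card {i\<in>{1..n}. odd (i + j)} + card {i\<in>{1..n}. odd (i + p)} = (n::nat)"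
proof -
  have "{i\<in>{1..n}. odd (i + j)} \<union> {i\<in>{1..n}. odd (i + p)} = {1..n}"
       "{i\<in>{1..n}. odd (i + j)} \<inter> {i\<in>{1..n}. odd (i + p)} = {}"
    using assms by auto
  then show ?thesis
    using card_Un_disjoint[of "{i\<in>{1..n}. odd (i + j)}" "{i\<in>{1..n}. odd (i + p)}"] by simp
qed

subsection \<open>Colorings of a labeled path\<close>

locale labeled_path =
  fixes n :: nat and \<sigma> :: "nat \<Rightarrow> nat"
  assumes bij: "bij_betw \<sigma> {1..n} {1..n}"
begin

lemma inj: "inj_on \<sigma> {1..n}"
  using bij by (simp add: bij_betw_def)

lemma label_in: "i \<in> {1..n} \<Longrightarrow> \<sigma> i \<in> {1..n}"
  using bij bij_betwE by blast

lemma inv_in: "x \<in> {1..n} \<Longrightarrow> the_inv_into {1..n} \<sigma> x \<in> {1..n}"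
  using bij_betw_the_inv_into[OF bij] bij_betwE by blast

lemma card_color_class: "card {v\<in>{1..n}. c v = k} = card {i\<in>{1..n}. c (\<sigma> i) = k}"
proof -
  have "{v\<in>{1..n}. c v = k} \<subseteq> \<sigma> ` {i\<in>{1..n}. c (\<sigma> i) = k}"
  proof
    fix v
    assume v: "v \<in> {v\<in>{1..n}. c v = k}"
    then have "v \<in> \<sigma> ` {1..n}"
      using bij by (simp add: bij_betw_def)
    with v show "v \<in> \<sigma> ` {i\<in>{1..n}. c (\<sigma> i) = k}"
      by auto
  qed
  then have "{v\<in>{1..n}. c v = k} = \<sigma> ` {i\<in>{1..n}. c (\<sigma> i) = k}"
    using label_in by auto
  moreover have "inj_on \<sigma> {i\<in>{1..n}. c (\<sigma> i) = k}"
    using inj by (rule inj_on_subset) auto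
  ultimately show ?thesis
    by (simp add: card_image)
qed

lemma proper_coloring_pos: "proper_coloring n \<sigma> c \<Longrightarrow> i \<in> {1..n} \<Longrightarrow> 1 \<le> c (\<sigma> i)"
  using label_in by (fastforce simp: proper_coloring_def)

lemma proper_coloring_adjacent:
  "proper_coloring n \<sigma> c \<Longrightarrow> i \<in> {1..<n} \<Longrightarrow> c (\<sigma> i) \<noteq> c (\<sigma> (Suc i))"
  by (simp add: proper_coloring_def)

definition label_coloring :: "(nat \<Rightarrow> nat) \<Rightarrow> nat \<Rightarrow> nat" where
  "label_coloring w x = (if x \<in> {1..n} then w (the_inv_into {1..n} \<sigma> x) else undefined)"

lemma label_coloring_at [simp]: "i \<in> {1..n} \<Longrightarrow> label_coloring w (\<sigma> i) = w i"
  using label_in inj by (simp add: label_coloring_def the_inv_into_f_f)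

lemma label_coloring_cong:
  assumes "\<And>i. i \<in> {1..n} \<Longrightarrow> w i = w' i"
  shows "label_coloring w = label_coloring w'"
proof
  fix x
  show "label_coloring w x = label_coloring w' x"
    using assms[OF inv_in[of x]] by (simp add: label_coloring_def)
qed

lemma label_coloring_positions:
  assumes "c \<in> extensional {1..n}"
  shows "label_coloring (\<lambda>i. c (\<sigma> i)) = c"
proof
  fix x
  show "label_coloring (\<lambda>i. c (\<sigma> i)) x = c x"
    using assms bij by (auto simp: label_coloring_def f_the_inv_into_f_bij_betw extensional_def)
qed

lemma proper_label_coloring:
  assumes "\<And>i. i \<in> {1..n} \<Longrightarrow> 1 \<le> w i" and "\<And>i. i \<in> {1..<n} \<Longrightarrow> w i \<noteq> w (Suc i)"
  shows "proper_coloring n \<sigma> (label_coloring w)"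
proof -
  have "label_coloring w x \<in> {1..}" if "x \<in> {1..n}" for x
    using assms(1)[OF inv_in[OF that]] that by (simp add: label_coloring_def)
  then have "label_coloring w \<in> {1..n} \<rightarrow>\<^sub>E {1..}"
    by (auto simp: label_coloring_def)
  then show ?thesis
    using assms(2) by (simp add: proper_coloring_def)
qed

definition asc_positions :: "(nat \<Rightarrow> nat) \<Rightarrow> nat set" where
  "asc_positions c = {i\<in>{1..<n}. \<sigma> i < \<sigma> (Suc i) \<longleftrightarrow> c (\<sigma> i) < c (\<sigma> (Suc i))}"

lemma finite_asc_positions [simp]: "finite (asc_positions c)"
  by (simp add: asc_positions_def)

lemma asc_eq_card_asc_positions:
  assumes "proper_coloring n \<sigma> c"
  shows "asc n \<sigma> c = card (asc_positions c)"
proof -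
  have "\<sigma> i \<noteq> \<sigma> (Suc i)" if "i \<in> {1..<n}" for i
    using inj that by (auto dest: inj_onD)
  then have "{i\<in>{1..<n}. (\<sigma> i < \<sigma> (Suc i) \<and> c (\<sigma> i) < c (\<sigma> (Suc i))) \<or>
      (\<sigma> (Suc i) < \<sigma> i \<and> c (\<sigma> (Suc i)) < c (\<sigma> i))} = asc_positions c"
    using proper_coloring_adjacent[OF assms] by (auto simp: asc_positions_def linorder_neq_iff)
  then show ?thesis
    by (simp add: asc_def)
qed

definition parity_positions :: "nat \<Rightarrow> nat set" where
  "parity_positions p = {i\<in>{1..<n}. \<sigma> i < \<sigma> (Suc i) \<longleftrightarrow> odd (i + p)}"

lemma asc_positions_alternating:
  "(\<And>i. i \<in> {1..n} \<Longrightarrow> c (\<sigma> i) = alternating_coloring p i) \<Longrightarrow>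
    asc_positions c = parity_positions p"
  by (auto simp: asc_positions_def parity_positions_def alternating_coloring_less_Suc_iff)

lemma parity_positions_even: "even (j + p) \<Longrightarrow> parity_positions j = parity_positions p"
  by (auto simp: parity_positions_def)

lemma card_parity_positions_odd:
  assumes "odd (j + p)"
  shows "card (parity_positions j) + card (parity_positions p) = n - 1"
proof -
  have "parity_positions j \<union> parity_positions p = {1..<n}"
       "parity_positions j \<inter> parity_positions p = {}"
    using assms by (auto simp: parity_positions_def)
  then show ?thesis
    using card_Un_disjoint[of "parity_positions j" "parity_positions p"]
    by (simp add: parity_positions_def)
qed

definition colorings :: "(nat \<Rightarrow> nat) \<Rightarrow> nat \<Rightarrow> (nat \<Rightarrow> nat) set" where
  "colorings \<mu> k = {c. proper_coloring n \<sigma> c \<and> asc n \<sigma> c = k \<and>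
      (\<forall>i\<ge>1. card {v\<in>{1..n}. c v = i} = \<mu> i)}"

lemma cqf_coeff_eq_card_colorings: "cqf_coeff n \<sigma> \<mu> k = card (colorings \<mu> k)"
  by (simp add: cqf_coeff_def colorings_def)

lemma colorings_value_less:
  assumes "c \<in> colorings \<mu> k" "\<forall>j\<ge>N. \<mu> j = 0" "v \<in> {1..n}"
  shows "c v \<in> {1..<N}"
proof -
  have "1 \<le> c v"
    using assms(1,3) by (auto simp: colorings_def proper_coloring_def)
  moreover have "card {u\<in>{1..n}. c u = c v} \<noteq> 0"
    using assms(3) by (auto simp: card_eq_0_iff)
  moreover have "\<mu> (c v) = card {u\<in>{1..n}. c u = c v}"
    using assms(1) \<open>1 \<le> c v\<close> by (simp add: colorings_def)
  ultimately show ?thesis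
    using assms(2) by (metis atLeastLessThan_iff not_le)
qed

lemma finite_colorings:
  assumes "\<forall>j\<ge>N. \<mu> j = 0"
  shows "finite (colorings \<mu> k)"
proof (rule finite_subset)
  show "colorings \<mu> k \<subseteq> {1..n} \<rightarrow>\<^sub>E {1..<N}"
    using colorings_value_less[OF _ assms]
    by (auto simp: colorings_def proper_coloring_def PiE_def)
qed (simp add: finite_PiE)

subsection \<open>The switching involution\<close>

definition in12 :: "(nat \<Rightarrow> nat) \<Rightarrow> nat \<Rightarrow> bool" where
  "in12 c i \<longleftrightarrow> c (\<sigma> i) \<in> {1, 2}"

definition isolated12 :: "(nat \<Rightarrow> nat) \<Rightarrow> nat \<Rightarrow> bool" where
  "isolated12 c i \<longleftrightarrow> \<not> (2 \<le> i \<and> in12 c (i - 1)) \<and> \<not> (i + 1 \<le> n \<and> in12 c (i + 1))"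

definition triple12 :: "(nat \<Rightarrow> nat) \<Rightarrow> bool" where
  "triple12 c \<longleftrightarrow> (\<exists>j. 2 \<le> j \<and> j + 1 \<le> n \<and> in12 c (j - 1) \<and> in12 c j \<and> in12 c (j + 1))"

text \<open>Exchanging 1 and 2 only at isolated vertices keeps every comparison along the path;
  in the presence of a run of three vertices colored 1 or 2 (which has to be 2, 1, 2 when
  the color 1 occurs once), the global exchange reverses exactly the two edges at its middle.\<close>

definition switched_color :: "(nat \<Rightarrow> nat) \<Rightarrow> nat \<Rightarrow> nat" where
  "switched_color c i = (if triple12 c \<or> isolated12 c i then swap12 (c (\<sigma> i)) else c (\<sigma> i))"

definition switch :: "(nat \<Rightarrow> nat) \<Rightarrow> nat \<Rightarrow> nat" where
  "switch c = label_coloring (switched_color c)"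

lemma switch_at [simp]: "i \<in> {1..n} \<Longrightarrow> switch c (\<sigma> i) = switched_color c i"
  by (simp add: switch_def)

lemma in12_switch: "i \<in> {1..n} \<Longrightarrow> in12 (switch c) i \<longleftrightarrow> in12 c i"
  by (auto simp: in12_def switched_color_def swap12_def)

lemma isolated12_switch:
  assumes "i \<in> {1..n}"
  shows "isolated12 (switch c) i \<longleftrightarrow> isolated12 c i"
proof -
  have "2 \<le> i \<Longrightarrow> in12 (switch c) (i - 1) \<longleftrightarrow> in12 c (i - 1)"
       "i + 1 \<le> n \<Longrightarrow> in12 (switch c) (i + 1) \<longleftrightarrow> in12 c (i + 1)"
    using assms by (auto intro!: in12_switch)
  then show ?thesis
    by (auto simp: isolated12_def)
qed

lemma triple12_switch: "triple12 (switch c) \<longleftrightarrow> triple12 c"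
proof -
  have "in12 (switch c) (j - 1) \<longleftrightarrow> in12 c (j - 1)" "in12 (switch c) j \<longleftrightarrow> in12 c j"
    "in12 (switch c) (j + 1) \<longleftrightarrow> in12 c (j + 1)" if "2 \<le> j" "j + 1 \<le> n" for j
    using that by (auto intro!: in12_switch)
  then show ?thesis
    unfolding triple12_def by meson
qed

lemma switch_switch:
  assumes "c \<in> extensional {1..n}"
  shows "switch (switch c) = c"
proof -
  have "switched_color (switch c) i = c (\<sigma> i)" if "i \<in> {1..n}" for i
    using that by (auto simp: switched_color_def triple12_switch isolated12_switch)
  then have "switch (switch c) = label_coloring (\<lambda>i. c (\<sigma> i))"
    unfolding switch_def[of "switch c"] by (rule label_coloring_cong)
  then show ?thesis
    using label_coloring_positions[OF assms] by simp
qed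

lemma switched_color_edge:
  assumes proper: "proper_coloring n \<sigma> c" and i: "i \<in> {1..<n}" and no_triple: "\<not> triple12 c"
  shows "switched_color c i \<noteq> switched_color c (Suc i) \<and>
    (switched_color c i < switched_color c (Suc i) \<longleftrightarrow> c (\<sigma> i) < c (\<sigma> (Suc i)))"
proof (cases "in12 c i \<and> in12 c (Suc i)")
  case True
  then have "\<not> isolated12 c i" "\<not> isolated12 c (Suc i)"
    using i by (auto simp: isolated12_def)
  then show ?thesis
    using no_triple proper_coloring_adjacent[OF proper i] by (simp add: switched_color_def)
next
  case False
  have "1 \<le> c (\<sigma> i)" "1 \<le> c (\<sigma> (Suc i))"
    using i proper_coloring_pos[OF proper] by auto
  with False show ?thesis
    by (intro swap12_choice_preserves_order)
      (use proper_coloring_adjacent[OF proper i] in \<open>auto simp: switched_color_def in12_def\<close>)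
qed

lemma proper_coloring_switch:
  assumes proper: "proper_coloring n \<sigma> c"
  shows "proper_coloring n \<sigma> (switch c)"
  unfolding switch_def
proof (rule proper_label_coloring)
  show "1 \<le> switched_color c i" if "i \<in> {1..n}" for i
    using proper_coloring_pos[OF proper that] by (auto simp: switched_color_def swap12_def)
  show "switched_color c i \<noteq> switched_color c (Suc i)" if "i \<in> {1..<n}" for i
  proof (cases "triple12 c")
    case True
    then show ?thesis
      using proper_coloring_adjacent[OF proper that] by (simp add: switched_color_def swap12_eq_iff)
  next
    case False
    then show ?thesis
      using switched_color_edge[OF proper that] by blast
  qed
qed

lemma asc_positions_switch_no_triple:
  assumes "proper_coloring n \<sigma> c" "\<not> triple12 c"
  shows "asc_positions (switch c) = asc_positions c"
proof -
  have "switch c (\<sigma> i) < switch c (\<sigma> (Suc i)) \<longleftrightarrow> c (\<sigma> i) < c (\<sigma> (Suc i))"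
    if "i \<in> {1..<n}" for i
    using switched_color_edge[OF assms(1) that assms(2)] that by simp
  then show ?thesis
    unfolding asc_positions_def by auto
qed

lemma in12_adjacent_unique:
  assumes proper: "proper_coloring n \<sigma> c" and "a \<in> {1, 2}"
    and unique: "\<forall>j\<in>{1..n}. c (\<sigma> j) = a \<longrightarrow> j = q"
    and i: "i \<in> {1..<n}" and "in12 c i" "in12 c (Suc i)"
  shows "i = q \<or> Suc i = q"
proof -
  have "c (\<sigma> i) = a \<or> c (\<sigma> (Suc i)) = a"
    using assms proper_coloring_adjacent[OF proper i] by (auto simp: in12_def)
  then show ?thesis
    using unique i by auto
qed

lemma asc_positions_switch_triple:
  assumes proper: "proper_coloring n \<sigma> c" and a: "a \<in> {1, 2}"
    and unique: "\<forall>j\<in>{1..n}. c (\<sigma> j) = a \<longrightarrow> j = q"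
    and q: "2 \<le> q" "q + 1 \<le> n" and run: "in12 c (q - 1)" "in12 c q" "in12 c (q + 1)"
  shows "asc_positions (switch c) = sym_diff (asc_positions c) {q - 1, q}"
proof -
  have "triple12 c"
    using q run unfolding triple12_def by blast
  then have switch_swap: "switch c (\<sigma> i) = swap12 (c (\<sigma> i))" if "i \<in> {1..n}" for i
    using that by (simp add: switched_color_def)
  have order: "swap12 (c (\<sigma> i)) < swap12 (c (\<sigma> (Suc i))) \<longleftrightarrow>
      (if i \<in> {q - 1, q} then \<not> c (\<sigma> i) < c (\<sigma> (Suc i)) else c (\<sigma> i) < c (\<sigma> (Suc i)))"
    if i: "i \<in> {1..<n}" for i
  proof (cases "i \<in> {q - 1, q}")
    case True
    then have "in12 c i" "in12 c (Suc i)"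
      using q run by (auto simp: Suc_diff_le)
    then show ?thesis
      using True proper_coloring_adjacent[OF proper i]
        swap12_less_swap12_iff[of "c (\<sigma> i)" "c (\<sigma> (Suc i))"]
      by (simp add: in12_def)
  next
    case False
    then have "\<not> (in12 c i \<and> in12 c (Suc i))"
      using in12_adjacent_unique[OF proper a unique i] by auto
    moreover have "1 \<le> c (\<sigma> i)" "1 \<le> c (\<sigma> (Suc i))"
      using i proper_coloring_pos[OF proper] by auto
    ultimately have "swap12 (c (\<sigma> i)) < swap12 (c (\<sigma> (Suc i))) \<longleftrightarrow> c (\<sigma> i) < c (\<sigma> (Suc i))"
      by (intro conjunct2[OF swap12_choice_preserves_order])
        (use proper_coloring_adjacent[OF proper i] in \<open>auto simp: in12_def\<close>)
    then show ?thesis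
      using False by simp
  qed
  have "{q - 1, q} \<subseteq> {1..<n}"
    using q by auto
  show ?thesis
  proof (rule set_eqI)
    fix i
    show "i \<in> asc_positions (switch c) \<longleftrightarrow> i \<in> sym_diff (asc_positions c) {q - 1, q}"
    proof (cases "i \<in> {1..<n}")
      case True
      then show ?thesis
        using order[OF True] switch_swap[of i] switch_swap[of "Suc i"] \<open>{q - 1, q} \<subseteq> {1..<n}\<close>
        by (auto simp: asc_positions_def)
    next
      case False
      then show ?thesis
        using \<open>{q - 1, q} \<subseteq> {1..<n}\<close> by (auto simp: asc_positions_def)
    qed
  qed
qed

lemma switched_color_in12_iff: "switched_color c i \<in> {1, 2} \<longleftrightarrow> in12 c i"
  by (auto simp: switched_color_def in12_def swap12_def)

lemma switched_color_eq_fixed: "k \<notin> {1, 2} \<Longrightarrow> switched_color c i = k \<longleftrightarrow> c (\<sigma> i) = k"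
  by (auto simp: switched_color_def swap12_def)

lemma card_switch_class:
  "card {v\<in>{1..n}. switch c v = k} = card {i\<in>{1..n}. switched_color c i = k}"
proof -
  have "{i\<in>{1..n}. switch c (\<sigma> i) = k} = {i\<in>{1..n}. switched_color c i = k}"
    by auto
  then show ?thesis
    using card_color_class[of "switch c" k] by simp
qed

lemma card_switch_class_triple:
  assumes "triple12 c"
  shows "card {v\<in>{1..n}. switch c v = k} = card {v\<in>{1..n}. c v = swap12 k}"
proof -
  have "{i\<in>{1..n}. switched_color c i = k} = {i\<in>{1..n}. c (\<sigma> i) = swap12 k}"
    using assms by (auto simp: switched_color_def)
  then show ?thesis
    using card_switch_class[of c k] card_color_class[of c "swap12 k"] by simp
qed

lemma triple12_center:
  assumes proper: "proper_coloring n \<sigma> c"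
    and unique: "\<forall>j\<in>{1..n}. c (\<sigma> j) = 1 \<longrightarrow> j = q"
    and "triple12 c"
  shows "2 \<le> q \<and> q + 1 \<le> n \<and> c (\<sigma> (q - 1)) = 2 \<and> c (\<sigma> (q + 1)) = 2"
proof -
  obtain j where j: "2 \<le> j" "j + 1 \<le> n" "in12 c (j - 1)" "in12 c j" "in12 c (j + 1)"
    using assms(3) by (auto simp: triple12_def)
  have j1: "j - 1 \<in> {1..<n}" "Suc (j - 1) = j" and j2: "j \<in> {1..<n}"
    using j by auto
  have "j - 1 = q \<or> j = q"
    using in12_adjacent_unique[OF proper _ unique j1(1)] j(3,4) j1(2) by simp
  moreover have "j = q \<or> j + 1 = q"
    using in12_adjacent_unique[OF proper _ unique j2] j(4,5) by simp
  ultimately have "j = q"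
    by linarith
  have "j - 1 \<in> {1..n}" "j + 1 \<in> {1..n}" "j - 1 \<noteq> j" "j + 1 \<noteq> j"
    using j by auto
  then have "c (\<sigma> (j - 1)) \<noteq> 1" "c (\<sigma> (j + 1)) \<noteq> 1"
    using unique \<open>j = q\<close> by blast+
  then show ?thesis
    using j \<open>j = q\<close> by (simp add: in12_def)
qed

lemma isolated12_away_from_unique:
  assumes proper: "proper_coloring n \<sigma> c" and a: "a \<in> {1, 2}"
    and unique: "\<forall>j\<in>{1..n}. c (\<sigma> j) = a \<longrightarrow> j = q"
    and i: "i \<in> {1..n}" and away: "in12 c i" "i \<noteq> q" "i \<noteq> q + 1" "i + 1 \<noteq> q"
  shows "isolated12 c i"
proof -
  have "\<not> in12 c (i - 1)" if "2 \<le> i"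
  proof
    assume "in12 c (i - 1)"
    moreover have "i - 1 \<in> {1..<n}" "Suc (i - 1) = i"
      using i that by auto
    ultimately have "i - 1 = q \<or> i = q"
      using in12_adjacent_unique[OF proper a unique, of "i - 1"] away(1) by fastforce
    then show False
      using away that by auto
  qed
  moreover have "\<not> in12 c (i + 1)" if "i + 1 \<le> n"
  proof
    assume "in12 c (i + 1)"
    moreover have "i \<in> {1..<n}"
      using i that by auto
    ultimately have "i = q \<or> i + 1 = q"
      using in12_adjacent_unique[OF proper a unique, of i] away(1) by fastforce
    then show False
      using away by auto
  qed
  ultimately show ?thesis
    by (simp add: isolated12_def)
qed

lemma switched_color_eq_2_iff:
  assumes proper: "proper_coloring n \<sigma> c" and q: "q \<in> {1..n}" "c (\<sigma> q) = 1"
    and unique: "\<forall>j\<in>{1..n}. c (\<sigma> j) = 1 \<longrightarrow> j = q"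
    and no_triple: "\<not> triple12 c" and i: "i \<in> {1..n}"
  shows "switched_color c i = 2 \<longleftrightarrow> (i = q \<and> isolated12 c q) \<or> (in12 c i \<and> (i = q + 1 \<or> i + 1 = q))"
proof -
  consider "i = q" | "i \<noteq> q" "\<not> in12 c i" | "i \<noteq> q" "in12 c i" "i = q + 1 \<or> i + 1 = q"
    | "i \<noteq> q" "in12 c i" "i \<noteq> q + 1" "i + 1 \<noteq> q"
    by blast
  then show ?thesis
  proof cases
    case 1
    then show ?thesis
      using q(2) no_triple by (simp add: switched_color_def swap12_def)
  next
    case 2
    then show ?thesis
      using switched_color_in12_iff[of c i] by auto
  next
    case 3
    have "in12 c q"
      using q(2) by (simp add: in12_def)
    then have "\<not> isolated12 c i"
      using 3 q(1) i by (auto simp: isolated12_def)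
    moreover have "c (\<sigma> i) = 2"
      using 3 unique i by (auto simp: in12_def)
    ultimately show ?thesis
      using 3 no_triple by (simp add: switched_color_def)
  next
    case 4
    then have "isolated12 c i"
      using isolated12_away_from_unique[OF proper _ unique i] by simp
    moreover have "c (\<sigma> i) = 2"
      using 4 unique i by (auto simp: in12_def)
    ultimately show ?thesis
      using 4 by (simp add: switched_color_def swap12_def)
  qed
qed

lemma card_switched_color_2:
  assumes proper: "proper_coloring n \<sigma> c" and q: "q \<in> {1..n}" "c (\<sigma> q) = 1"
    and unique: "\<forall>j\<in>{1..n}. c (\<sigma> j) = 1 \<longrightarrow> j = q"
    and no_triple: "\<not> triple12 c"
  shows "card {i\<in>{1..n}. switched_color c i = 2} = 1"
proof -
  note eq_2 = switched_color_eq_2_iff[OF proper q unique no_triple]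
  obtain r where "r \<in> {1..n}" and r: "\<And>i. i \<in> {1..n} \<Longrightarrow> switched_color c i = 2 \<longleftrightarrow> i = r"
  proof (cases "isolated12 c q")
    case True
    have "\<not> in12 c i" if "i \<in> {1..n}" "i = q + 1 \<or> i + 1 = q" for i
      using that(2)
    proof
      assume "i = q + 1"
      then show ?thesis
        using that(1) True by (simp add: isolated12_def)
    next
      assume "i + 1 = q"
      then have "2 \<le> q" "i = q - 1"
        using that(1) by auto
      then show ?thesis
        using True by (simp add: isolated12_def)
    qed
    then show thesis
      using that[of q] q(1) eq_2 True by blast
  next
    case False
    then obtain r where r: "r = q - 1 \<and> 2 \<le> q \<or> r = q + 1 \<and> q + 1 \<le> n" "in12 c r"
      by (auto simp: isolated12_def)
    then have "r \<in> {1..n}" "r = q + 1 \<or> r + 1 = q"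
      using q(1) by auto
    have "\<not> (2 \<le> q \<and> q + 1 \<le> n \<and> in12 c (q - 1) \<and> in12 c (q + 1))"
      using no_triple q(2) by (auto simp: triple12_def in12_def)
    then have "i = r" if "in12 c i" "i = q + 1 \<or> i + 1 = q" "i \<in> {1..n}" for i
      using that r by auto
    then show thesis
      using that[of r] \<open>r \<in> {1..n}\<close> \<open>r = q + 1 \<or> r + 1 = q\<close> r(2) eq_2 False by blast
  qed
  then have "{i\<in>{1..n}. switched_color c i = 2} = {r}"
    by auto
  then show ?thesis
    by simp
qed

lemma card_switched_color_1:
  assumes proper: "proper_coloring n \<sigma> c" and q: "q \<in> {1..n}" "c (\<sigma> q) = 1"
    and unique: "\<forall>j\<in>{1..n}. c (\<sigma> j) = 1 \<longrightarrow> j = q"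
    and no_triple: "\<not> triple12 c"
  shows "card {i\<in>{1..n}. switched_color c i = 1} = card {i\<in>{1..n}. c (\<sigma> i) = 2}"
proof -
  define S where "S = {i\<in>{1..n}. in12 c i}"
  define S1 where "S1 = {i\<in>{1..n}. switched_color c i = 1}"
  define S2 where "S2 = {i\<in>{1..n}. switched_color c i = 2}"
  define C2 where "C2 = {i\<in>{1..n}. c (\<sigma> i) = 2}"
  have "S = S1 \<union> S2" "S1 \<inter> S2 = {}" "finite S1" "finite S2"
    using switched_color_in12_iff[of c] by (auto simp: S_def S1_def S2_def)
  then have "card S = card S1 + 1"
    using card_switched_color_2[OF assms] card_Un_disjoint[of S1 S2] by (simp add: S2_def)
  moreover have "S = insert q C2"
    using q unique unfolding S_def C2_def in12_def by blast
  moreover have "q \<notin> C2" "finite C2"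
    using q(2) by (simp_all add: C2_def)
  ultimately have "card S = card C2 + 1"
    by simp
  then show ?thesis
    using \<open>card S = card S1 + 1\<close> by (simp add: S1_def C2_def)
qed

lemma eq_swap12_alternating_coloring:
  assumes proper: "proper_coloring n \<sigma> c"
    and colors: "\<forall>j\<in>{1..n}. c (\<sigma> j) \<in> {1, 2, 3}"
    and q: "c (\<sigma> q) = 1" and unique: "\<forall>j\<in>{1..n}. c (\<sigma> j) = 1 \<longrightarrow> j = q"
    and center: "2 \<le> q" "q + 1 \<le> n" "c (\<sigma> (q - 1)) = 2" "c (\<sigma> (q + 1)) = 2"
    and i: "i \<in> {1..n}"
  shows "c (\<sigma> i) = swap12 (alternating_coloring q i)"
proof -
  define T where "T j = swap12 (alternating_coloring q j)" for j
  have T_other: "T j = (if odd (j + q) then 2 else 3)" if "j \<noteq> q" for j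
    using that by (simp add: T_def swap12_def alternating_coloring_def)
  have adjacent: "c (\<sigma> k) = T k"
    if "k \<in> {1..n}" "k' \<in> {1..n}" "k \<noteq> q" "k' \<noteq> q" "k = Suc k' \<or> k' = Suc k"
      and "c (\<sigma> k') = T k'" for k k'
  proof -
    have "c (\<sigma> k) \<noteq> c (\<sigma> k')"
    proof (cases "k = Suc k'")
      case True
      then show ?thesis
        using proper_coloring_adjacent[OF proper, of k'] that(1,2) by auto
    next
      case False
      then have "k' = Suc k"
        using that(5) by simp
      then show ?thesis
        using proper_coloring_adjacent[OF proper, of k] that(1,2) by auto
    qed
    moreover have "c (\<sigma> k) \<in> {2, 3}"
      using colors[rule_format, OF that(1)] unique[rule_format, OF that(1)] that(3) by auto
    moreover have "T k \<in> {2, 3}" "T k' \<in> {2, 3}" "T k \<noteq> T k'"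
      using T_other that(3,4,5) by auto
    ultimately show ?thesis
      using that(6) by auto
  qed
  have up: "c (\<sigma> k) = T k" if "q + 1 \<le> k" "k \<le> n" for k
    using that
  proof (induction k rule: dec_induct)
    case base
    then show ?case
      using center T_other[of "q + 1"] by simp
  next
    case (step m)
    then show ?case
      using adjacent[of "Suc m" m] by simp
  qed
  have down: "c (\<sigma> k) = T k" if "1 \<le> k" "k \<le> q - 1" for k
    using that(2,1)
  proof (induction k rule: inc_induct)
    case base
    then show ?case
      using center T_other[of "q - 1"] by simp
  next
    case (step m)
    then show ?case
      using adjacent[of m "Suc m"] center by simp
  qed
  consider "i = q" | "q + 1 \<le> i" | "1 \<le> i" "i \<le> q - 1"
    using i by fastforce
  then have "c (\<sigma> i) = T i"
    using up[of i] down[of i] q i by cases (simp_all add: T_def swap12_def alternating_coloring_def)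
  then show ?thesis
    by (simp add: T_def)
qed

end

subsection \<open>The reference coloring at a peak\<close>

locale labeled_path_peak = labeled_path +
  fixes p :: nat
  assumes peak: "2 \<le> p" "p + 1 \<le> n" "\<sigma> (p - 1) < \<sigma> p" "\<sigma> (p + 1) < \<sigma> p"
begin

definition ref_coloring :: "nat \<Rightarrow> nat" where
  "ref_coloring = label_coloring (alternating_coloring p)"

definition ref_content :: "nat \<Rightarrow> nat" where
  "ref_content k = card {i\<in>{1..n}. alternating_coloring p i = k}"

definition ref_asc :: nat where
  "ref_asc = asc n \<sigma> ref_coloring"

lemma ref_coloring_at [simp]: "i \<in> {1..n} \<Longrightarrow> ref_coloring (\<sigma> i) = alternating_coloring p i"
  by (simp add: ref_coloring_def)

lemma proper_ref_coloring: "proper_coloring n \<sigma> ref_coloring"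
  unfolding ref_coloring_def
  by (rule proper_label_coloring) (auto simp: alternating_coloring_def)

lemma ref_coloring_in_colorings: "ref_coloring \<in> colorings ref_content ref_asc"
proof -
  have "{i\<in>{1..n}. ref_coloring (\<sigma> i) = k} = {i\<in>{1..n}. alternating_coloring p i = k}" for k
    by auto
  then show ?thesis
    using proper_ref_coloring card_color_class[of ref_coloring]
    by (simp add: colorings_def ref_asc_def ref_content_def)
qed

lemma ref_content_1: "ref_content 1 = card {i\<in>{1..n}. odd (i + p)}"
proof -
  have "{i\<in>{1..n}. alternating_coloring p i = 1} = {i\<in>{1..n}. odd (i + p)}"
    by (auto simp: alternating_coloring_def)
  then show ?thesis
    by (simp add: ref_content_def)
qed

lemma ref_content_2: "ref_content 2 = 1"
proof -
  have "{i\<in>{1..n}. alternating_coloring p i = 2} = {p}"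
    using peak by (auto simp: alternating_coloring_def)
  then show ?thesis
    by (simp add: ref_content_def)
qed

lemma ref_content_ge_4: "4 \<le> k \<Longrightarrow> ref_content k = 0"
  by (auto simp: ref_content_def alternating_coloring_def)

lemma ref_asc_eq_card_parity_positions: "ref_asc = card (parity_positions p)"
  using asc_eq_card_asc_positions[OF proper_ref_coloring] asc_positions_alternating[of ref_coloring p]
  by (simp add: ref_asc_def)

text \<open>At the peak p the switch turns the ascents on both edges at p into descents.\<close>

lemma asc_switch_ref_coloring: "asc n \<sigma> (switch ref_coloring) + 2 = ref_asc"
proof -
  have p_range: "p - 1 \<in> {1..n}" "p \<in> {1..n}" "p + 1 \<in> {1..n}"
    using peak by auto
  have unique: "\<forall>j\<in>{1..n}. ref_coloring (\<sigma> j) = 2 \<longrightarrow> j = p"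
    by (auto simp: alternating_coloring_def)
  have "in12 ref_coloring (p - 1)" "in12 ref_coloring p" "in12 ref_coloring (p + 1)"
    using p_range peak(1) by (auto simp: in12_def alternating_coloring_def)
  then have "asc_positions (switch ref_coloring) = sym_diff (asc_positions ref_coloring) {p - 1, p}"
    using asc_positions_switch_triple[OF proper_ref_coloring _ unique peak(1,2)] by simp
  moreover have "p - 1 \<in> asc_positions ref_coloring" "p \<in> asc_positions ref_coloring"
    using peak p_range by (auto simp: asc_positions_def alternating_coloring_def)
  ultimately have "card (asc_positions (switch ref_coloring)) + 2 = card (asc_positions ref_coloring)"
    using card_sym_diff_pair_subset[of "asc_positions ref_coloring" "p - 1" p] peak(1) by simp
  then show ?thesis
    using asc_eq_card_asc_positions proper_coloring_switch proper_ref_coloring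
    by (simp add: ref_asc_def)
qed

abbreviation swapped_colorings :: "(nat \<Rightarrow> nat) set" where
  "swapped_colorings \<equiv> colorings (ref_content \<circ> swap12) ref_asc"

lemma card_swapped_color_class:
  assumes "c \<in> swapped_colorings" "1 \<le> k"
  shows "card {i\<in>{1..n}. c (\<sigma> i) = k} = ref_content (swap12 k)"
  using assms card_color_class[of c k] by (simp add: colorings_def)

lemma swapped_colorings_values:
  assumes "c \<in> swapped_colorings" "i \<in> {1..n}"
  shows "c (\<sigma> i) \<in> {1, 2, 3}"
proof -
  have "\<forall>j\<ge>4. (ref_content \<circ> swap12) j = 0"
    by (simp add: swap12_fixed ref_content_ge_4)
  then have "c (\<sigma> i) \<in> {1..<4}"
    using colorings_value_less[OF assms(1)] label_in[OF assms(2)] by blast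
  then show ?thesis
    by auto
qed

lemma swapped_colorings_unique_1:
  assumes "c \<in> swapped_colorings"
  obtains q where "q \<in> {1..n}" "c (\<sigma> q) = 1" "\<forall>j\<in>{1..n}. c (\<sigma> j) = 1 \<longrightarrow> j = q"
proof -
  have "card {i\<in>{1..n}. c (\<sigma> i) = 1} = 1"
    using card_swapped_color_class[OF assms, of 1] ref_content_2 by (simp add: swap12_def)
  then obtain q where "{i\<in>{1..n}. c (\<sigma> i) = 1} = {q}"
    by (rule card_1_singletonE)
  then show thesis
    using that[of q] by blast
qed

lemma asc_switch_swapped_triple:
  assumes A: "c \<in> swapped_colorings" and q: "c (\<sigma> q) = 1"
    and unique: "\<forall>j\<in>{1..n}. c (\<sigma> j) = 1 \<longrightarrow> j = q" and triple: "triple12 c"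
  shows "if (\<sigma> (q - 1) < \<sigma> q) = (\<sigma> q < \<sigma> (q + 1)) then asc n \<sigma> (switch c) = ref_asc
    else asc n \<sigma> (switch c) = ref_asc + 2 \<or> asc n \<sigma> (switch c) + 2 = ref_asc"
proof -
  have proper: "proper_coloring n \<sigma> c" and asc: "card (asc_positions c) = ref_asc"
    using A asc_eq_card_asc_positions by (auto simp: colorings_def)
  have center: "2 \<le> q" "q + 1 \<le> n" "c (\<sigma> (q - 1)) = 2" "c (\<sigma> (q + 1)) = 2"
    using triple12_center[OF proper unique triple] by auto
  then have "asc_positions (switch c) = sym_diff (asc_positions c) {q - 1, q}"
    using asc_positions_switch_triple[OF proper _ unique center(1,2)] q by (simp add: in12_def)
  then have asc_switch: "asc n \<sigma> (switch c) = card (sym_diff (asc_positions c) {q - 1, q})"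
    using asc_eq_card_asc_positions[OF proper_coloring_switch[OF proper]] by simp
  have mem: "q - 1 \<in> asc_positions c \<longleftrightarrow> \<not> \<sigma> (q - 1) < \<sigma> q"
    "q \<in> asc_positions c \<longleftrightarrow> \<sigma> q < \<sigma> (q + 1)"
    using center q by (auto simp: asc_positions_def)
  have "q - 1 \<noteq> q"
    using center by simp
  show ?thesis
  proof (cases "(\<sigma> (q - 1) < \<sigma> q) = (\<sigma> q < \<sigma> (q + 1))")
    case True
    then show ?thesis
      using card_sym_diff_pair_one[of "asc_positions c" "q - 1" q] mem asc asc_switch \<open>q - 1 \<noteq> q\<close>
      by simp
  next
    case False
    then have "q - 1 \<notin> asc_positions c \<and> q \<notin> asc_positions c \<or>
        q - 1 \<in> asc_positions c \<and> q \<in> asc_positions c"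
      using mem by blast
    then show ?thesis
      using card_sym_diff_pair_disjoint[of "asc_positions c" "q - 1" q]
        card_sym_diff_pair_subset[of "asc_positions c" "q - 1" q] False asc asc_switch \<open>q - 1 \<noteq> q\<close>
      by auto
  qed
qed

text \<open>A coloring of the swapped class whose run 2, 1, 2 sits at a peak or valley q is
  forced to be the alternating coloring around q with 1 and 2 exchanged; the parities of
  its ascent count and of the number of its colors 2 then contradict those of the reference
  coloring.\<close>

lemma swapped_triple_monotone:
  assumes A: "c \<in> swapped_colorings" and q: "c (\<sigma> q) = 1"
    and unique: "\<forall>j\<in>{1..n}. c (\<sigma> j) = 1 \<longrightarrow> j = q" and triple: "triple12 c"
  shows "(\<sigma> (q - 1) < \<sigma> q) = (\<sigma> q < \<sigma> (q + 1))"
proof (rule ccontr)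
  assume extreme: "(\<sigma> (q - 1) < \<sigma> q) \<noteq> (\<sigma> q < \<sigma> (q + 1))"
  have proper: "proper_coloring n \<sigma> c"
    using A by (simp add: colorings_def)
  have center: "2 \<le> q" "q + 1 \<le> n" "c (\<sigma> (q - 1)) = 2" "c (\<sigma> (q + 1)) = 2"
    using triple12_center[OF proper unique triple] by auto
  have colors: "\<forall>j\<in>{1..n}. c (\<sigma> j) \<in> {1, 2, 3}"
    using swapped_colorings_values[OF A] by blast
  have rigid: "c (\<sigma> i) = swap12 (alternating_coloring q i)" if "i \<in> {1..n}" for i
    using eq_swap12_alternating_coloring[OF proper colors q unique center that] .
  have "switch c (\<sigma> i) = alternating_coloring q i" if "i \<in> {1..n}" for i
    using that triple by (simp add: switched_color_def rigid)
  then have "asc_positions (switch c) = parity_positions q"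
    by (rule asc_positions_alternating)
  then have shift: "card (parity_positions q) = card (parity_positions p) + 2 \<or>
      card (parity_positions q) + 2 = card (parity_positions p)"
    using asc_switch_swapped_triple[OF A q unique triple] extreme
      asc_eq_card_asc_positions[OF proper_coloring_switch[OF proper]]
    by (simp add: ref_asc_eq_card_parity_positions)
  have "c (\<sigma> i) = 2 \<longleftrightarrow> odd (i + q)" if "i \<in> {1..n}" for i
    using rigid[OF that] by (auto simp: swap12_def alternating_coloring_def)
  then have "{i\<in>{1..n}. c (\<sigma> i) = 2} = {i\<in>{1..n}. odd (i + q)}"
    by blast
  then have same_odd: "card {i\<in>{1..n}. odd (i + q)} = card {i\<in>{1..n}. odd (i + p)}"
    using card_swapped_color_class[OF A, of 2] ref_content_1 by (simp add: swap12_def)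
  show False
  proof (cases "even (q + p)")
    case True
    then show False
      using shift parity_positions_even[OF True] by simp
  next
    case False
    have "even n"
      using card_odd_sum_complement[OF False, of n] same_odd by presburger
    then have "odd (card (parity_positions q) + card (parity_positions p))"
      using card_parity_positions_odd[OF False] center(2) by simp
    moreover have "even (x + y)" if "x = y + 2 \<or> x + 2 = y" for x y :: nat
      using that by presburger
    ultimately show False
      using shift by blast
  qed
qed

lemma switch_swapped_triple:
  assumes A: "c \<in> swapped_colorings" and triple: "triple12 c"
  shows "switch c \<in> colorings ref_content ref_asc"
proof -
  obtain q where q: "q \<in> {1..n}" "c (\<sigma> q) = 1" and unique: "\<forall>j\<in>{1..n}. c (\<sigma> j) = 1 \<longrightarrow> j = q"
    using swapped_colorings_unique_1[OF A] by blast
  have proper: "proper_coloring n \<sigma> c"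
    using A by (simp add: colorings_def)
  have "asc n \<sigma> (switch c) = ref_asc"
    using asc_switch_swapped_triple[OF A q(2) unique triple] swapped_triple_monotone[OF A q(2) unique triple]
    by simp
  moreover have "card {v\<in>{1..n}. switch c v = k} = ref_content k" if "1 \<le> k" for k
  proof -
    have "1 \<le> swap12 k"
      using that by (simp add: swap12_def)
    then show ?thesis
      using card_switch_class_triple[OF triple] card_color_class[of c "swap12 k"]
        card_swapped_color_class[OF A] by simp
  qed
  ultimately show ?thesis
    using proper_coloring_switch[OF proper] by (simp add: colorings_def)
qed

lemma switch_swapped_no_triple:
  assumes A: "c \<in> swapped_colorings" and no_triple: "\<not> triple12 c"
  shows "switch c \<in> colorings ref_content ref_asc"
proof -
  obtain q where q: "q \<in> {1..n}" "c (\<sigma> q) = 1" and unique: "\<forall>j\<in>{1..n}. c (\<sigma> j) = 1 \<longrightarrow> j = q"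
    using swapped_colorings_unique_1[OF A] by blast
  have proper: "proper_coloring n \<sigma> c" and asc: "asc n \<sigma> c = ref_asc"
    using A by (simp_all add: colorings_def)
  have "asc n \<sigma> (switch c) = ref_asc"
    using asc asc_positions_switch_no_triple[OF proper no_triple]
      asc_eq_card_asc_positions[OF proper] asc_eq_card_asc_positions[OF proper_coloring_switch[OF proper]]
    by simp
  moreover have "card {i\<in>{1..n}. switched_color c i = k} = ref_content k" if "1 \<le> k" for k
  proof (cases "k \<in> {1, 2}")
    case True
    then show ?thesis
      using card_switched_color_1[OF proper q unique no_triple] card_switched_color_2[OF proper q unique no_triple]
        card_swapped_color_class[OF A, of 2] ref_content_2 by (auto simp: swap12_def)
  next
    case False
    then show ?thesis
      using switched_color_eq_fixed[OF False, of c] card_swapped_color_class[OF A that]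
      by (simp add: swap12_fixed)
  qed
  ultimately show ?thesis
    using proper_coloring_switch[OF proper] card_switch_class by (simp add: colorings_def)
qed

lemma switch_swapped_colorings:
  "switch ` swapped_colorings \<subseteq> colorings ref_content ref_asc - {ref_coloring}"
proof
  fix d
  assume "d \<in> switch ` swapped_colorings"
  then obtain c where A: "c \<in> swapped_colorings" and d: "d = switch c"
    by blast
  have "switch c \<noteq> ref_coloring"
  proof
    assume "switch c = ref_coloring"
    moreover have "c \<in> extensional {1..n}"
      using A by (auto simp: colorings_def proper_coloring_def PiE_def)
    ultimately have "c = switch ref_coloring"
      using switch_switch by metis
    then show False
      using A asc_switch_ref_coloring by (simp add: colorings_def)
  qed
  then show "d \<in> colorings ref_content ref_asc - {ref_coloring}"
    using A d switch_swapped_triple[OF A] switch_swapped_no_triple[OF A] by (cases "triple12 c") auto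
qed

theorem not_cqf_symmetric: "\<not> cqf_symmetric n \<sigma>"
proof
  assume "cqf_symmetric n \<sigma>"
  then have symmetric: "card swapped_colorings = card (colorings ref_content ref_asc)"
    using bij_betw_swap12 by (simp add: cqf_symmetric_def cqf_coeff_eq_card_colorings)
  have "inj_on switch swapped_colorings"
    by (rule inj_on_inverseI[where g = switch])
      (auto simp: colorings_def proper_coloring_def PiE_def intro: switch_switch)
  have finite: "finite (colorings ref_content ref_asc)"
    by (rule finite_colorings[of 4]) (simp add: ref_content_ge_4)
  have "card swapped_colorings = card (switch ` swapped_colorings)"
    using \<open>inj_on switch swapped_colorings\<close> by (simp add: card_image)
  also have "\<dots> \<le> card (colorings ref_content ref_asc - {ref_coloring})"
    using switch_swapped_colorings finite by (intro card_mono) auto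
  also have "\<dots> < card (colorings ref_content ref_asc)"
    using finite ref_coloring_in_colorings by (rule card_Diff1_less)
  finally show False
    using symmetric by simp
qed

end

theorem proposition4p3:
  fixes n :: nat and \<sigma> :: "nat \<Rightarrow> nat"
  assumes "n \<ge> 1"
    and "is_labeled_path n \<sigma>"
    and "length (ribbon_composition n \<sigma>) \<ge> 2"
    and "\<forall>a\<in>set (ribbon_composition n \<sigma>). a \<ge> 2"
  shows "\<not> cqf_symmetric n \<sigma>"
proof -
  interpret labeled_path n \<sigma>
    using assms(2) by unfold_locales (simp add: is_labeled_path_def)
  obtain p where "2 \<le> p" "p + 1 \<le> n" "\<sigma> (p - 1) < \<sigma> p" "\<sigma> (p + 1) < \<sigma> p"
    using ribbon_composition_peak[OF inj assms(3,4)] by blast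
  then interpret labeled_path_peak n \<sigma> p
    by unfold_locales
  show ?thesis
    by (rule not_cqf_symmetric)
qed

end
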